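(* Let $\textbf{F}$ be an IVF on a nonempty subset $\mathcal{X}$ of $\mathbb{R}^n$ that is $gH$-differentiable at $\bar{x}\in\mathcal{X}$, with linear IVF $\textbf{L}_{\bar{x}}$ as in the definition of $gH$-differentiability. Then the $gH$-gradient $\nabla\textbf{F}(\bar{x})$ exists and, for each $d=(d_1,\dots,d_n)^T\in\mathbb{R}^n$, \[\textbf{L}_{\bar{x}}(d)=d^T\odot\nabla\textbf{F}(\bar{x}),\quad\text{where } d^T\odot\nabla\textbf{F}(\bar{x})=\bigoplus_{i=1}^n d_i\odot D_i\textbf{F}(\bar{x}).\]
   Context: $I(\mathbb{R})$: closed bounded intervals $\textbf{A}=[\underline{a},\overline{a}]$ with Moore arithmetic ($\oplus$ endpointwise; $\lambda\odot\textbf{A}=[\lambda\underline{a},\lambda\overline{a}]$ if $\lambda\ge0$, $[\lambda\overline{a},\lambda\underline{a}]$ if $\lambda<0$); $gH$-difference $\textbf{A}\ominus_{gH}\textbf{B}=[\min\{\underline{a}-\underline{b},\overline{a}-\overline{b}\},\max\{\underline{a}-\underline{b},\overline{a}-\overline{b}\}]$; limits of intervals are in the norm $\max\{|\underline{a}|,|\overline{a}|\}$. An IVF is $\textbf{F}(x)=[\underline{f}(x),\overline{f}(x)]$. The $i$-th partial $gH$-derivative $D_i\textbf{F}(\bar{x})$ is the $gH$-derivative $\lim_{h\to0}\frac1h\odot(\textbf{G}_i(\bar{x}_i+h)\ominus_{gH}\textbf{G}_i(\bar{x}_i))$ of $\textbf{G}_i(x_i)=\textbf{F}(\bar{x}_1,\dots,x_i,\dots,\bar{x}_n)$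 at $\bar{x}_i$, when it exists; $\nabla\textbf{F}(\bar{x})=(D_1\textbf{F}(\bar{x}),\dots,D_n\textbf{F}(\bar{x}))^T$ exists when all these exist. An IVF $\textbf{L}:\mathbb{R}^n\to I(\mathbb{R})$ is linear if $\textbf{L}(x)=\bigoplus_{i=1}^n x_i\odot\textbf{L}(e_i)$ for all $x$, $e_i$ the standard basis. $\textbf{F}$ is $gH$-differentiable at $\bar{x}$ if there exist a linear IVF $\textbf{L}_{\bar{x}}:\mathbb{R}^n\to I(\mathbb{R})$, an IVF $\textbf{E}(\textbf{F}(\bar{x});d)$ and $\delta>0$ such that $(\textbf{F}(\bar{x}+d)\ominus_{gH}\textbf{F}(\bar{x}))\ominus_{gH}\textbf{L}_{\bar{x}}(d)=\lVert d\rVert\odot\textbf{E}(\textbf{F}(\bar{x});d)$ for all $d$ with $\lVert d\rVert<\delta$, where $\textbf{E}(\textbf{F}(\bar{x});d)\to\textbf{0}$ as $\lVert d\rVert\to0$. *)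

theory Defs
  imports "HOL-Analysis.Analysis" "HOL-Library.Interval"
begin

text \<open>Closed bounded real intervals are the library type real interval
  (HOL-Library.Interval), with lower/upper endpoints and Moore addition (+),
  neutral element 0 = [0,0]; the big sum is iterated Moore addition.\<close>

definition smult_I :: "real \<Rightarrow> real interval \<Rightarrow> real interval" where
  "smult_I c A = (if c \<ge> 0 then Ivl (c * lower A) (c * upper A)
                  else Ivl (c * upper A) (c * lower A))"

definition gH_minus :: "real interval \<Rightarrow> real interval \<Rightarrow> real interval" where
  "gH_minus A B = Ivl (min (lower A - lower B) (upper A - upper B))
                      (max (lower A - lower B) (upper A - upper B))"

definition I_norm :: "real interval \<Rightarrow> real" where
  "I_norm A = max \<bar>lower A\<bar> \<bar>upper A\<bar>"

definition I_tendsto :: "('a \<Rightarrow> real interval) \<Rightarrow> real interval \<Rightarrow> 'a filter \<Rightarrow> bool" where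
  "I_tendsto f D F \<longleftrightarrow> ((\<lambda>h. I_norm (gH_minus (f h) D)) \<longlongrightarrow> 0) F"

definition has_gH_derivative :: "(real \<Rightarrow> real interval) \<Rightarrow> real \<Rightarrow> real interval \<Rightarrow> bool" where
  "has_gH_derivative G x D \<longleftrightarrow>
     I_tendsto (\<lambda>h. smult_I (1 / h) (gH_minus (G (x + h)) (G x))) D (at 0)"

definition has_partial_gH :: "(real^'n \<Rightarrow> real interval) \<Rightarrow> real^'n \<Rightarrow> 'n \<Rightarrow> real interval \<Rightarrow> bool" where
  "has_partial_gH F xbar i D \<longleftrightarrow>
     has_gH_derivative (\<lambda>t. F (\<chi> j. if j = i then t else xbar $ j)) (xbar $ i) D"

definition linear_IVF :: "(real^'n \<Rightarrow> real interval) \<Rightarrow> bool" where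
  "linear_IVF L \<longleftrightarrow> (\<forall>x. L x = (\<Sum>i\<in>UNIV. smult_I (x $ i) (L (axis i 1))))"

definition gH_differentiable_with :: "(real^'n \<Rightarrow> real interval) \<Rightarrow> real^'n \<Rightarrow> (real^'n \<Rightarrow> real interval) \<Rightarrow> bool" where
  "gH_differentiable_with F xbar L \<longleftrightarrow> linear_IVF L \<and>
     (\<exists>E \<delta>. \<delta> > 0 \<and>
        (\<forall>d. norm d < \<delta> \<longrightarrow>
           gH_minus (gH_minus (F (xbar + d)) (F xbar)) (L d) = smult_I (norm d) (E d)) \<and>
        I_tendsto E 0 (at 0))"

end

theory Submission
  imports Defs
begin

text \<open>The i-th partial gH-derivative is L(e_i). Along a direction v, dividing the remainder
  identity at d = t v by t (scalar multiplication scales the gH-difference norm by its modulus,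
  and L(t v) = t L(v)) shows that the difference quotient of t \<mapsto> F(xbar + t v) is within
  norm v \<cdot> I_norm (E (t v)) of L v, which tends to 0. The representation of L d as
  \<Sum> d_i L(e_i) is then the linearity of L.\<close>

lemma lower_Ivl [simp]: "lower (Ivl a b) = min a (b::real)"
  by (simp add: Ivl.rep_eq lower.rep_eq)

lemma upper_Ivl [simp]: "upper (Ivl a b) = (b::real)"
  by (simp add: Ivl.rep_eq upper.rep_eq)

lemma lower_smult_I: "lower (smult_I c A) = (if c \<ge> 0 then c * lower A else c * upper A)"
  using lower_le_upper[of A]
  by (auto simp: smult_I_def min_def mult_left_mono mult_left_mono_neg)

lemma upper_smult_I: "upper (smult_I c A) = (if c \<ge> 0 then c * upper A else c * lower A)"
  by (simp add: smult_I_def)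

lemma lower_gH_minus: "lower (gH_minus A B) = min (lower A - lower B) (upper A - upper B)"
  by (simp add: gH_minus_def)

lemma upper_gH_minus: "upper (gH_minus A B) = max (lower A - lower B) (upper A - upper B)"
  by (simp add: gH_minus_def)

lemma I_norm_gH_minus: "I_norm (gH_minus A B) = max \<bar>lower A - lower B\<bar> \<bar>upper A - upper B\<bar>"
  unfolding I_norm_def lower_gH_minus upper_gH_minus by (auto simp: min_def max_def)

lemma gH_minus_zero_right [simp]: "gH_minus A 0 = A"
  by (rule interval_eqI) (auto simp: lower_gH_minus upper_gH_minus)

lemma I_tendsto_zero_iff: "I_tendsto f 0 F \<longleftrightarrow> ((\<lambda>x. I_norm (f x)) \<longlongrightarrow> 0) F"
  by (simp add: I_tendsto_def)

lemma smult_I_zero_right [simp]: "smult_I c 0 = 0"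
  by (rule interval_eqI) (auto simp: lower_smult_I upper_smult_I)

lemma smult_I_one [simp]: "smult_I 1 A = A"
  by (rule interval_eqI) (auto simp: lower_smult_I upper_smult_I)

lemma smult_I_add: "smult_I c (A + B) = smult_I c A + smult_I c B"
  by (rule interval_eqI) (auto simp: lower_smult_I upper_smult_I algebra_simps)

lemma smult_I_sum: "smult_I c (\<Sum>i\<in>S. f i) = (\<Sum>i\<in>S. smult_I c (f i))"
  by (induction S rule: infinite_finite_induct) (simp_all add: smult_I_add)

lemma smult_I_smult_I: "smult_I a (smult_I b A) = smult_I (a * b) A"
  by (rule interval_eqI) (auto simp: lower_smult_I upper_smult_I zero_le_mult_iff)

lemma I_norm_smult_I: "I_norm (smult_I c A) = \<bar>c\<bar> * I_norm A"
proof -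
  have "I_norm (smult_I c A) = max \<bar>c * lower A\<bar> \<bar>c * upper A\<bar>"
    by (simp add: I_norm_def lower_smult_I upper_smult_I max.commute)
  also have "\<dots> = \<bar>c\<bar> * I_norm A"
    by (simp add: I_norm_def abs_mult max_mult_distrib_left)
  finally show ?thesis .
qed

lemma I_norm_gH_minus_smult_I:
  "I_norm (gH_minus (smult_I c A) (smult_I c B)) = \<bar>c\<bar> * I_norm (gH_minus A B)"
proof -
  have "I_norm (gH_minus (smult_I c A) (smult_I c B))
      = max \<bar>c * (lower A - lower B)\<bar> \<bar>c * (upper A - upper B)\<bar>"
    by (simp add: I_norm_gH_minus lower_smult_I upper_smult_I right_diff_distrib max.commute)
  also have "\<dots> = \<bar>c\<bar> * I_norm (gH_minus A B)"
    by (simp add: I_norm_gH_minus abs_mult max_mult_distrib_left)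
  finally show ?thesis .
qed

lemma I_norm_gH_minus_div:
  assumes "h \<noteq> 0" and "gH_minus A (smult_I h B) = smult_I r C"
  shows "I_norm (gH_minus (smult_I (1 / h) A) B) = \<bar>r / h\<bar> * I_norm C"
proof -
  have "I_norm (gH_minus (smult_I (1 / h) A) B)
      = I_norm (gH_minus (smult_I (1 / h) A) (smult_I (1 / h) (smult_I h B)))"
    using assms(1) by (simp add: smult_I_smult_I)
  also have "\<dots> = \<bar>1 / h\<bar> * \<bar>r\<bar> * I_norm C"
    by (simp add: I_norm_gH_minus_smult_I assms(2) I_norm_smult_I)
  finally show ?thesis
    by (simp add: abs_div)
qed

lemma linear_IVF_scaleR:
  assumes "linear_IVF L"
  shows "L (c *\<^sub>R x) = smult_I c (L x)"
proof -
  have expand: "L y = (\<Sum>i\<in>UNIV. smult_I (y $ i) (L (axis i 1)))" for y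
    using assms unfolding linear_IVF_def by blast
  have "L (c *\<^sub>R x) = (\<Sum>i\<in>UNIV. smult_I (c * x $ i) (L (axis i 1)))"
    using expand[of "c *\<^sub>R x"] by simp
  also have "\<dots> = smult_I c (\<Sum>i\<in>UNIV. smult_I (x $ i) (L (axis i 1)))"
    by (simp add: smult_I_sum smult_I_smult_I)
  also have "\<dots> = smult_I c (L x)"
    using expand[of x] by (rule arg_cong[OF sym])
  finally show ?thesis .
qed

lemma has_gH_derivative_shift:
  "has_gH_derivative G x D \<longleftrightarrow> has_gH_derivative (\<lambda>h. G (x + h)) 0 D"
  by (simp add: has_gH_derivative_def)

lemma gH_differentiable_with_directional:
  assumes "gH_differentiable_with F xbar L"
  shows "has_gH_derivative (\<lambda>t. F (xbar + t *\<^sub>R v)) 0 (L v)"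
proof -
  obtain E \<delta> where "\<delta> > 0"
    and remainder: "\<And>d. norm d < \<delta> \<Longrightarrow>
           gH_minus (gH_minus (F (xbar + d)) (F xbar)) (L d) = smult_I (norm d) (E d)"
    and E_lim: "((\<lambda>d. I_norm (E d)) \<longlongrightarrow> 0) (at 0)"
    and lin: "linear_IVF L"
    using assms unfolding gH_differentiable_with_def I_tendsto_zero_iff by blast
  have error_lim: "((\<lambda>h. norm v * I_norm (E (h *\<^sub>R v))) \<longlongrightarrow> 0) (at (0::real))"
  proof (cases "v = 0")
    case False
    have "filterlim (\<lambda>h::real. h *\<^sub>R v) (at 0) (at 0)"
      using False by (auto simp: filterlim_at eventually_at_filter intro!: tendsto_eq_intros)
    then show ?thesis
      using tendsto_mult_right_zero[OF filterlim_compose[OF E_lim]] by blast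
  qed simp
  have "\<forall>\<^sub>F h in at (0::real). norm (h *\<^sub>R v) < \<delta>"
    using \<open>\<delta> > 0\<close> by (intro order_tendstoD) (auto intro!: tendsto_eq_intros)
  moreover have "\<forall>\<^sub>F h in at (0::real). h \<noteq> 0"
    by (simp add: eventually_at_filter)
  ultimately have "\<forall>\<^sub>F h in at (0::real). norm v * I_norm (E (h *\<^sub>R v)) =
      I_norm (gH_minus (smult_I (1 / h) (gH_minus (F (xbar + h *\<^sub>R v)) (F (xbar + 0 *\<^sub>R v))))
        (L v))"
  proof eventually_elim
    case (elim h)
    have "gH_minus (gH_minus (F (xbar + h *\<^sub>R v)) (F xbar)) (smult_I h (L v))
        = smult_I (\<bar>h\<bar> * norm v) (E (h *\<^sub>R v))"
      using remainder[OF elim(1)] by (simp add: linear_IVF_scaleR[OF lin])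
    from I_norm_gH_minus_div[OF \<open>h \<noteq> 0\<close> this] show ?case
      using \<open>h \<noteq> 0\<close> by simp
  qed
  then show ?thesis
    unfolding has_gH_derivative_def I_tendsto_def
    using Lim_transform_eventually[OF error_lim] by simp
qed

lemma gH_differentiable_with_partial:
  assumes "gH_differentiable_with F xbar L"
  shows "has_partial_gH F xbar i (L (axis i 1))"
proof -
  have "(\<chi> j. if j = i then xbar $ i + h else xbar $ j) = xbar + h *\<^sub>R axis i 1" for h
    by (auto simp: vec_eq_iff axis_def)
  then show ?thesis
    using gH_differentiable_with_directional[OF assms, of "axis i 1"]
    unfolding has_partial_gH_def has_gH_derivative_shift[of _ "xbar $ i"] by simp
qed

theorem theorem3p1:
  fixes F :: "real^'n \<Rightarrow> real interval"
    and X :: "(real^'n) set"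
    and xbar :: "real^'n"
    and L :: "real^'n \<Rightarrow> real interval"
  assumes "X \<noteq> {}"
    and "xbar \<in> X"
    and "gH_differentiable_with F xbar L"
  shows "\<exists>DF :: 'n \<Rightarrow> real interval.
           (\<forall>i. has_partial_gH F xbar i (DF i)) \<and>
           (\<forall>d. L d = (\<Sum>i\<in>UNIV. smult_I (d $ i) (DF i)))"
proof (intro exI conjI allI)
  show "has_partial_gH F xbar i (L (axis i 1))" for i
    using gH_differentiable_with_partial[OF assms(3)] .
  show "L d = (\<Sum>i\<in>UNIV. smult_I (d $ i) (L (axis i 1)))" for d
    using assms(3) unfolding gH_differentiable_with_def linear_IVF_def by blast
qed

end
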